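(* Let $\mathbf C$ be a pointed restriction category and $Q\colon\mathbf C\to\mathrm{Ext}(\mathbf C)$ the quotient functor. For every well-pointed restriction category $\mathbf D$ and every restriction functor $F\colon\mathbf C\to\mathbf D$ sending the chosen restriction terminal object of $\mathbf C$ to that of $\mathbf D$ and full on points, there is a unique restriction functor $\hat F\colon\mathrm{Ext}(\mathbf C)\to\mathbf D$ that is full on points and satisfies $\hat F\circ Q=F$; it is given by $\hat F(A)=F(A)$, $\hat F([f])=F(f)$.
   Context: A restriction category is a category equipped with an assignment to each morphism $f\colon A\to B$ of an endomorphism $\overline{f}\colon A\to A$ such that (i) $f\circ\overline f=f$; (ii) $\overline f\circ\overline g=\overline g\circ\overline f$ whenever $f,g$ have a common domain; (iii) $\overline{g\circ\overline f}=\overline g\circ\overline f$ whenever $f,g$ have a common domain; (iv) $\overline g\circ f=f\circ\overline{g\circ f}$ whenever $g\circ f$ is defined. A morphism $f$ is total if $\overline f=\mathrm{id}$. A restriction functor is a functor $F$ with $F(\overline f)=\overline{F(f)}$. An object $1$ is restriction terminal if every object has exactly one total morphism to $1$. A pointed restriction category is a restriction category with a chosen restriction terminal object $1$; a point of $A$ is a morphism $1\to A$. It is well-pointed if moreover parallel $f,g\colon A\to B$ are equal whenever $f\circ a=g\circ a$ for all points $a$ of $A$. For parallel $f,g$ in a pointed restriction category, $f\approx g$ iff $f\circ a=g\circ a$ for all points $a$; $\mathrm{Ext}(\mathbf C)=\mathbf C/{\approx}$, a restriction category with $\overline{[f]}=[\overline f]$ (same chosen object $1$), and $Q(f)=[f]$.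 A functor $F\colon\mathbf C\to\mathbf D$ between pointed restriction categories is full on points if every point $p\colon 1\to F(A)$ in $\mathbf D$ equals $F(a)$ for some point $a\colon1\to A$ in $\mathbf C$. *)

theory Defs
  imports Main
begin

text \<open>A category with restriction structure and a chosen object (the chosen
restriction terminal object, relevant for pointed restriction categories).
Composition convention: Comp C g f is g after f.\<close>

record ('o,'a) rcat =
  Obj  :: "'o set"
  Arr  :: "'a set"
  Dom  :: "'a \<Rightarrow> 'o"
  Cod  :: "'a \<Rightarrow> 'o"
  Id   :: "'o \<Rightarrow> 'a"
  Comp :: "'a \<Rightarrow> 'a \<Rightarrow> 'a"
  Rst  :: "'a \<Rightarrow> 'a"
  Term :: "'o"

definition hom :: "('o,'a) rcat \<Rightarrow> 'o \<Rightarrow> 'o \<Rightarrow> 'a set" where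
  "hom C A B = {f \<in> Arr C. Dom C f = A \<and> Cod C f = B}"

definition category :: "('o,'a) rcat \<Rightarrow> bool" where
  "category C \<longleftrightarrow>
     (\<forall>f\<in>Arr C. Dom C f \<in> Obj C \<and> Cod C f \<in> Obj C) \<and>
     (\<forall>A\<in>Obj C. Id C A \<in> hom C A A) \<and>
     (\<forall>f\<in>Arr C. \<forall>g\<in>Arr C. Cod C f = Dom C g \<longrightarrow> Comp C g f \<in> hom C (Dom C f) (Cod C g)) \<and>
     (\<forall>f\<in>Arr C. Comp C f (Id C (Dom C f)) = f \<and> Comp C (Id C (Cod C f)) f = f) \<and>
     (\<forall>f\<in>Arr C. \<forall>g\<in>Arr C. \<forall>h\<in>Arr C. Cod C f = Dom C g \<longrightarrow> Cod C g = Dom C h \<longrightarrow>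
        Comp C h (Comp C g f) = Comp C (Comp C h g) f)"

definition restriction_category :: "('o,'a) rcat \<Rightarrow> bool" where
  "restriction_category C \<longleftrightarrow> category C \<and>
     (\<forall>f\<in>Arr C. Rst C f \<in> hom C (Dom C f) (Dom C f)) \<and>
     (\<forall>f\<in>Arr C. Comp C f (Rst C f) = f) \<and>
     (\<forall>f\<in>Arr C. \<forall>g\<in>Arr C. Dom C f = Dom C g \<longrightarrow>
        Comp C (Rst C f) (Rst C g) = Comp C (Rst C g) (Rst C f)) \<and>
     (\<forall>f\<in>Arr C. \<forall>g\<in>Arr C. Dom C f = Dom C g \<longrightarrow>
        Rst C (Comp C g (Rst C f)) = Comp C (Rst C g) (Rst C f)) \<and>
     (\<forall>f\<in>Arr C. \<forall>g\<in>Arr C. Cod C f = Dom C g \<longrightarrow>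
        Comp C (Rst C g) f = Comp C f (Rst C (Comp C g f)))"

definition total :: "('o,'a) rcat \<Rightarrow> 'a \<Rightarrow> bool" where
  "total C f \<longleftrightarrow> Rst C f = Id C (Dom C f)"

definition restriction_terminal :: "('o,'a) rcat \<Rightarrow> 'o \<Rightarrow> bool" where
  "restriction_terminal C T \<longleftrightarrow> T \<in> Obj C \<and>
     (\<forall>A\<in>Obj C. \<exists>!t. t \<in> hom C A T \<and> total C t)"

definition pointed_rcat :: "('o,'a) rcat \<Rightarrow> bool" where
  "pointed_rcat C \<longleftrightarrow> restriction_category C \<and> restriction_terminal C (Term C)"

definition points :: "('o,'a) rcat \<Rightarrow> 'o \<Rightarrow> 'a set" where
  "points C A = hom C (Term C) A"

definition well_pointed :: "('o,'a) rcat \<Rightarrow> bool" where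
  "well_pointed C \<longleftrightarrow> pointed_rcat C \<and>
     (\<forall>f\<in>Arr C. \<forall>g\<in>Arr C. Dom C f = Dom C g \<and> Cod C f = Cod C g \<and>
        (\<forall>a\<in>points C (Dom C f). Comp C f a = Comp C g a) \<longrightarrow> f = g)"

definition approx :: "('o,'a) rcat \<Rightarrow> 'a \<Rightarrow> 'a \<Rightarrow> bool" where
  "approx C f g \<longleftrightarrow> f \<in> Arr C \<and> g \<in> Arr C \<and> Dom C f = Dom C g \<and> Cod C f = Cod C g \<and>
     (\<forall>a\<in>points C (Dom C f). Comp C f a = Comp C g a)"

text \<open>The equivalence class [f]; this is the arrow map of the quotient functor Q.\<close>
definition eclass :: "('o,'a) rcat \<Rightarrow> 'a \<Rightarrow> 'a set" where
  "eclass C f = {g. approx C f g}"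

definition rep :: "'a set \<Rightarrow> 'a" where
  "rep X = (SOME f. f \<in> X)"

definition Ext :: "('o,'a) rcat \<Rightarrow> ('o,'a set) rcat" where
  "Ext C = \<lparr> Obj = Obj C,
             Arr = eclass C ` Arr C,
             Dom = (\<lambda>X. Dom C (rep X)),
             Cod = (\<lambda>X. Cod C (rep X)),
             Id = (\<lambda>A. eclass C (Id C A)),
             Comp = (\<lambda>Y X. eclass C (Comp C (rep Y) (rep X))),
             Rst = (\<lambda>X. eclass C (Rst C (rep X))),
             Term = Term C \<rparr>"

definition is_functor :: "('o,'a) rcat \<Rightarrow> ('p,'b) rcat \<Rightarrow> ('o \<Rightarrow> 'p) \<Rightarrow> ('a \<Rightarrow> 'b) \<Rightarrow> bool" where
  "is_functor C D Fo Fa \<longleftrightarrow>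
     (\<forall>A\<in>Obj C. Fo A \<in> Obj D) \<and>
     (\<forall>f\<in>Arr C. Fa f \<in> hom D (Fo (Dom C f)) (Fo (Cod C f))) \<and>
     (\<forall>A\<in>Obj C. Fa (Id C A) = Id D (Fo A)) \<and>
     (\<forall>f\<in>Arr C. \<forall>g\<in>Arr C. Cod C f = Dom C g \<longrightarrow> Fa (Comp C g f) = Comp D (Fa g) (Fa f))"

definition restriction_functor :: "('o,'a) rcat \<Rightarrow> ('p,'b) rcat \<Rightarrow> ('o \<Rightarrow> 'p) \<Rightarrow> ('a \<Rightarrow> 'b) \<Rightarrow> bool" where
  "restriction_functor C D Fo Fa \<longleftrightarrow> is_functor C D Fo Fa \<and>
     (\<forall>f\<in>Arr C. Fa (Rst C f) = Rst D (Fa f))"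

definition full_on_points :: "('o,'a) rcat \<Rightarrow> ('p,'b) rcat \<Rightarrow> ('o \<Rightarrow> 'p) \<Rightarrow> ('a \<Rightarrow> 'b) \<Rightarrow> bool" where
  "full_on_points C D Fo Fa \<longleftrightarrow>
     (\<forall>A\<in>Obj C. \<forall>p\<in>points D (Fo A). \<exists>a\<in>points C A. p = Fa a)"

end

theory Submission
  imports Defs
begin

text \<open>Two arrows with f \<approx> g agree on all points, so their images under a functor that is
full on points agree on all points of D; well-pointedness of D then forces F f = F g.
Hence F is constant on the classes of \<approx>, and F^ X := F (rep X) is well defined
independently of the representative chosen by rep. Since every operation of Ext C is
computed on representatives, the functor laws of F^ are those of F, and points of Ext C
are the classes of points of C. Uniqueness is immediate because every arrow of Ext C
is a class [f].\<close>

lemma approx_refl: "f \<in> Arr C \<Longrightarrow> approx C f f"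
  by (simp add: approx_def)

lemma approx_rep_eclass: "f \<in> Arr C \<Longrightarrow> approx C f (rep (eclass C f))"
  unfolding rep_def eclass_def mem_Collect_eq
  by (rule someI[where x = f]) (rule approx_refl)

lemma rep_eclass:
  assumes "f \<in> Arr C"
  shows "rep (eclass C f) \<in> Arr C" "Dom C (rep (eclass C f)) = Dom C f"
    "Cod C (rep (eclass C f)) = Cod C f"
  using approx_rep_eclass[OF assms] by (auto simp: approx_def)

lemma Arr_Ext_E:
  assumes "X \<in> Arr (Ext C)"
  obtains f where "f \<in> Arr C" "X = eclass C f"
  using assms by (auto simp: Ext_def)

lemma rep_in_Arr_Ext: "X \<in> Arr (Ext C) \<Longrightarrow> rep X \<in> Arr C"
  by (metis Arr_Ext_E rep_eclass(1))

lemma eclass_in_points_Ext: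
  assumes "a \<in> points C A"
  shows "eclass C a \<in> points (Ext C) A"
proof -
  have a: "a \<in> Arr C" and "Dom C a = Term C" "Cod C a = A"
    using assms by (auto simp: points_def hom_def)
  then show ?thesis
    using rep_eclass[OF a] by (auto simp: points_def hom_def Ext_def)
qed

lemma full_on_points_respects_approx:
  assumes C: "category C" and D: "well_pointed D"
    and F: "is_functor C D Fo Fa" and P: "full_on_points C D Fo Fa"
    and fg: "approx C f g"
  shows "Fa f = Fa g"
proof -
  have f: "f \<in> Arr C" and g: "g \<in> Arr C"
    and dom: "Dom C f = Dom C g" and cod: "Cod C f = Cod C g"
    and agree: "\<forall>a\<in>points C (Dom C f). Comp C f a = Comp C g a"
    using fg by (auto simp: approx_def)
  have Ff: "Fa f \<in> hom D (Fo (Dom C f)) (Fo (Cod C f))"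
    and Fg: "Fa g \<in> hom D (Fo (Dom C g)) (Fo (Cod C g))"
    using F f g by (auto simp: is_functor_def)
  have obj: "Dom C f \<in> Obj C" using C f by (simp add: category_def)
  have "Comp D (Fa f) p = Comp D (Fa g) p" if p: "p \<in> points D (Fo (Dom C f))" for p
  proof -
    obtain a where a: "a \<in> points C (Dom C f)" and pa: "p = Fa a"
      using P obj p unfolding full_on_points_def by blast
    have "a \<in> Arr C" "Cod C a = Dom C f" using a by (auto simp: points_def hom_def)
    then have "Comp D (Fa f) (Fa a) = Fa (Comp C f a)" "Comp D (Fa g) (Fa a) = Fa (Comp C g a)"
      using F f g dom by (simp_all add: is_functor_def)
    then show ?thesis using agree a pa by simp
  qed
  then show ?thesis
    using D Ff Fg dom cod by (simp add: well_pointed_def hom_def)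
qed

lemma restriction_functor_Ext:
  assumes C: "restriction_category C" and F: "restriction_functor C D Fo Fa"
    and resp: "\<And>f. f \<in> Arr C \<Longrightarrow> Fa (rep (eclass C f)) = Fa f"
  shows "restriction_functor (Ext C) D Fo (\<lambda>X. Fa (rep X))"
proof -
  have cat: "category C" using C by (simp add: restriction_category_def)
  have F_functor: "is_functor C D Fo Fa" using F by (simp add: restriction_functor_def)
  have "is_functor (Ext C) D Fo (\<lambda>X. Fa (rep X))"
    unfolding is_functor_def
  proof (intro conjI ballI impI)
    fix A assume "A \<in> Obj (Ext C)"
    then show "Fo A \<in> Obj D" using F_functor by (simp add: Ext_def is_functor_def)
  next
    fix X assume "X \<in> Arr (Ext C)"
    then have "rep X \<in> Arr C" by (rule rep_in_Arr_Ext)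
    then show "Fa (rep X) \<in> hom D (Fo (Dom (Ext C) X)) (Fo (Cod (Ext C) X))"
      using F_functor by (simp add: Ext_def is_functor_def)
  next
    fix A assume "A \<in> Obj (Ext C)"
    moreover from this have "Id C A \<in> Arr C" using cat by (simp add: Ext_def category_def hom_def)
    ultimately show "Fa (rep (Id (Ext C) A)) = Id D (Fo A)"
      using resp F_functor by (simp add: Ext_def is_functor_def)
  next
    fix X Y assume "X \<in> Arr (Ext C)" "Y \<in> Arr (Ext C)" "Cod (Ext C) X = Dom (Ext C) Y"
    then have X: "rep X \<in> Arr C" and Y: "rep Y \<in> Arr C" and XY: "Cod C (rep X) = Dom C (rep Y)"
      by (simp_all add: rep_in_Arr_Ext) (simp add: Ext_def)
    then have "Comp C (rep Y) (rep X) \<in> Arr C" using cat by (simp add: category_def hom_def)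
    then show "Fa (rep (Comp (Ext C) Y X)) = Comp D (Fa (rep Y)) (Fa (rep X))"
      using resp F_functor X Y XY by (simp add: Ext_def is_functor_def)
  qed
  moreover have "Fa (rep (Rst (Ext C) X)) = Rst D (Fa (rep X))" if "X \<in> Arr (Ext C)" for X
  proof -
    have X: "rep X \<in> Arr C" using that by (rule rep_in_Arr_Ext)
    then have "Rst C (rep X) \<in> Arr C" using C by (simp add: restriction_category_def hom_def)
    then show ?thesis using resp F X by (simp add: Ext_def restriction_functor_def)
  qed
  ultimately show ?thesis by (simp add: restriction_functor_def)
qed

lemma full_on_points_Ext:
  assumes P: "full_on_points C D Fo Fa"
    and resp: "\<And>f. f \<in> Arr C \<Longrightarrow> Fa (rep (eclass C f)) = Fa f"
  shows "full_on_points (Ext C) D Fo (\<lambda>X. Fa (rep X))"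
  unfolding full_on_points_def
proof (intro ballI)
  fix A p assume "A \<in> Obj (Ext C)" "p \<in> points D (Fo A)"
  then obtain a where a: "a \<in> points C A" and pa: "p = Fa a"
    using P by (auto simp: Ext_def full_on_points_def)
  have "p = Fa (rep (eclass C a))"
    using resp a pa by (simp add: points_def hom_def)
  with eclass_in_points_Ext[OF a] show "\<exists>X\<in>points (Ext C) A. p = Fa (rep X)" by blast
qed

theorem theorem4p4:
  fixes C :: "('o,'a) rcat" and D :: "('p,'b) rcat"
    and Fo :: "'o \<Rightarrow> 'p" and Fa :: "'a \<Rightarrow> 'b"
  assumes "pointed_rcat C"
    and "well_pointed D"
    and "restriction_functor C D Fo Fa"
    and "Fo (Term C) = Term D"
    and "full_on_points C D Fo Fa"
  shows "restriction_functor (Ext C) D Fo (\<lambda>X. Fa (rep X))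
         \<and> full_on_points (Ext C) D Fo (\<lambda>X. Fa (rep X))
         \<and> (\<forall>f\<in>Arr C. Fa (rep (eclass C f)) = Fa f)
         \<and> (\<forall>Go Ga. restriction_functor (Ext C) D Go Ga \<and> full_on_points (Ext C) D Go Ga
               \<and> (\<forall>A\<in>Obj C. Go A = Fo A) \<and> (\<forall>f\<in>Arr C. Ga (eclass C f) = Fa f)
             \<longrightarrow> (\<forall>A\<in>Obj (Ext C). Go A = Fo A) \<and> (\<forall>X\<in>Arr (Ext C). Ga X = Fa (rep X)))"
proof -
  have C: "restriction_category C" using assms(1) by (simp add: pointed_rcat_def)
  have cat: "category C" and F: "is_functor C D Fo Fa"
    using C assms(3) by (simp_all add: restriction_category_def restriction_functor_def)
  have resp: "Fa (rep (eclass C f)) = Fa f" if "f \<in> Arr C" for f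
    using full_on_points_respects_approx[OF cat assms(2) F assms(5) approx_rep_eclass[OF that]]
    by (rule sym)
  have unique: "Ga X = Fa (rep X)"
    if "\<forall>f\<in>Arr C. Ga (eclass C f) = Fa f" "X \<in> Arr (Ext C)" for Ga X
    using that resp by (metis Arr_Ext_E)
  show ?thesis
    using restriction_functor_Ext[OF C assms(3) resp] full_on_points_Ext[OF assms(5) resp]
      resp unique by (simp add: Ext_def)
qed

end
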